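(* Let $n\ge2$, $A\in\mathbb{R}^{n\times n}$ symmetric with eigenvalues $\lambda_1\ge\dots\ge\lambda_n$, $\rho=\lambda_1-\lambda_n$, and suppose $\delta:=\lambda_{n-1}-\lambda_n>0$. Let $\gamma>0$ and $0<\beta\le\big[2(\frac73+\gamma)+(\frac23+\gamma)\frac{\rho}{\delta}\big]^{-1}\delta$. Then $f(\mathbf{z})=\frac12\mathbf{z}^TA\mathbf{z}+\frac{\beta}{2}\sum_kz_k^4$ on $\mathbb{S}^{n-1}$ is $(\gamma\beta,\gamma\beta,\gamma\beta)$-strict-saddle.
   Context: $\mathbb{S}^{n-1}$ is the unit sphere in $\mathbb{R}^n$, $\mathcal{T}_{\mathbf{z}}=\{\mathbf{v}:\mathbf{v}^T\mathbf{z}=0\}$. For $\mathbf{z}\in\mathbb{S}^{n-1}$ let $2\lambda=\mathbf{z}^TA\mathbf{z}+2\beta\|\mathbf{z}\|_4^4$, $\mathrm{grad} f(\mathbf{z})=[A+2\beta\,\mathrm{diag}(z_1^2,\dots,z_n^2)]\mathbf{z}-2\lambda\mathbf{z}$, and $H_f(\mathbf{z})[\mathbf{v}]=\mathbf{v}^T[A+6\beta\,\mathrm{diag}(z_1^2,\dots,z_n^2)-2\lambda I]\mathbf{v}$. For $\xi,\epsilon,\zeta>0$, $f$ is $(\xi,\epsilon,\zeta)$-strict-saddle if for every $\mathbf{z}\in\mathbb{S}^{n-1}$ at least one holds: (1) $H_f(\mathbf{z})[\mathbf{v}]\ge\xi$ for all $\mathbf{v}\in\mathcal{T}_{\mathbf{z}}\cap\mathbb{S}^{n-1}$;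 (2) $\|\mathrm{grad} f(\mathbf{z})\|\ge\epsilon$; (3) there is $\mathbf{v}\in\mathcal{T}_{\mathbf{z}}\cap\mathbb{S}^{n-1}$ with $H_f(\mathbf{z})[\mathbf{v}]\le-\zeta$. *)

theory Defs
  imports "Jordan_Normal_Form.Char_Poly" "HOL-Computational_Algebra.Polynomial"
begin

text \<open>Eigenvalues of a square real matrix, with multiplicity (roots of the characteristic
  polynomial), sorted in non-increasing order: eigs A ! 0 = lambda_1 \<ge> ... \<ge> eigs A ! (n-1) = lambda_n.\<close>
definition eigs :: "real mat \<Rightarrow> real list" where
  "eigs A = rev (sorted_list_of_multiset (proots (char_poly A)))"

definition unit_sphere :: "nat \<Rightarrow> real vec set" where
  "unit_sphere n = {z. z \<in> carrier_vec n \<and> z \<bullet> z = 1}"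

definition tangent :: "real vec \<Rightarrow> real vec set" where
  "tangent z = {v. v \<in> carrier_vec (dim_vec z) \<and> v \<bullet> z = 0}"

definition fobj :: "real mat \<Rightarrow> real \<Rightarrow> real vec \<Rightarrow> real" where
  "fobj A \<beta> z = (1/2) * (z \<bullet> (A *\<^sub>v z)) + (\<beta>/2) * (\<Sum>k<dim_vec z. (z $ k) ^ 4)"

definition two_lambda :: "real mat \<Rightarrow> real \<Rightarrow> real vec \<Rightarrow> real" where
  "two_lambda A \<beta> z = z \<bullet> (A *\<^sub>v z) + 2 * \<beta> * (\<Sum>k<dim_vec z. (z $ k) ^ 4)"

definition grad_f :: "real mat \<Rightarrow> real \<Rightarrow> real vec \<Rightarrow> real vec" where
  "grad_f A \<beta> z = (A + 2 * \<beta> \<cdot>\<^sub>m mat_diag (dim_vec z) (\<lambda>k. (z $ k)^2)) *\<^sub>v z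
                   - two_lambda A \<beta> z \<cdot>\<^sub>v z"

definition hess_f :: "real mat \<Rightarrow> real \<Rightarrow> real vec \<Rightarrow> real vec \<Rightarrow> real" where
  "hess_f A \<beta> z v = v \<bullet> ((A + 6 * \<beta> \<cdot>\<^sub>m mat_diag (dim_vec z) (\<lambda>k. (z $ k)^2)
                          - two_lambda A \<beta> z \<cdot>\<^sub>m 1\<^sub>m (dim_vec z)) *\<^sub>v v)"

definition strict_saddle :: "nat \<Rightarrow> real mat \<Rightarrow> real \<Rightarrow> real \<Rightarrow> real \<Rightarrow> real \<Rightarrow> bool" where
  "strict_saddle n A \<beta> \<xi> \<epsilon> \<zeta> \<longleftrightarrow>
     (\<forall>z \<in> unit_sphere n.
        (\<forall>v \<in> tangent z \<inter> unit_sphere n. hess_f A \<beta> z v \<ge> \<xi>)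
      \<or> sqrt (grad_f A \<beta> z \<bullet> grad_f A \<beta> z) \<ge> \<epsilon>
      \<or> (\<exists>v \<in> tangent z \<inter> unit_sphere n. hess_f A \<beta> z v \<le> - \<zeta>))"

end

theory Submission
  imports Defs "HOL-Analysis.L2_Norm" "HOL-Combinatorics.Permutations"
begin

(* Let u be a unit eigenvector for the smallest eigenvalue L of A, let \<delta> be the gap to the
   next eigenvalue and, for z on the sphere, let c = u\<bullet>z; replacing u by -u, c \<ge> 0. The
   quadratic part satisfies z\<^sup>TAz - L \<ge> \<delta>(1 - c\<^sup>2), and the quartic term perturbs gradient and
   Hessian only by O(\<beta>): its tangential gradient has norm at most 1/2, and
   \<Sum>\<^sub>k z\<^sub>k\<^sup>2v\<^sub>k\<^sup>2 \<le> 1/2 for orthonormal z, v. Three regimes remain: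
   - c\<^sup>2 \<le> 1/5: the tangential part of u is a direction of curvature \<le> 3\<beta> - 3\<delta>/5;
   - 1/5 \<le> c\<^sup>2 \<le> 4/5: the gradient has norm \<ge> 2\<delta>/5 - \<beta>;
   - c\<^sup>2 \<ge> 4/5: a small gradient forces (z\<^sup>TAz - L)c = O(\<beta>), and then every tangent
     direction has curvature \<ge> \<delta>c\<^sup>2 - O(\<beta>).
   Since \<rho> \<ge> \<delta>, the bound on \<beta> gives 16\<beta>/3 + 3\<gamma>\<beta> \<le> \<delta>, which is all three regimes need.
   The vector u and the bound x\<^sup>TAx \<ge> (L + \<delta>)|x|\<^sup>2 on the orthogonal complement of u come from
   the spectral theorem, proved by Householder deflation. *)

lemma scalar_prod_eq_sum:
  "x \<in> carrier_vec n \<Longrightarrow> y \<in> carrier_vec n \<Longrightarrow> x \<bullet> y = (\<Sum>k<n. x $ k * y $ k)"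
  by (simp add: scalar_prod_def lessThan_atLeast0)

lemma scalar_prod_self_nonneg: "0 \<le> (x :: real vec) \<bullet> x"
  unfolding scalar_prod_def by (rule sum_nonneg) simp

lemma sqrt_scalar_prod_self_eq_L2_set:
  "x \<in> carrier_vec n \<Longrightarrow> sqrt (x \<bullet> x) = L2_set (($) x) {..<n}"
  by (simp add: L2_set_def scalar_prod_eq_sum power2_eq_square)

lemma abs_scalar_prod_le:
  fixes x y :: "real vec"
  assumes "x \<in> carrier_vec n" "y \<in> carrier_vec n"
  shows "\<bar>x \<bullet> y\<bar> \<le> sqrt (x \<bullet> x) * sqrt (y \<bullet> y)"
proof -
  have "\<bar>x \<bullet> y\<bar> \<le> (\<Sum>k<n. \<bar>x $ k\<bar> * \<bar>y $ k\<bar>)"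
    using assms by (simp add: scalar_prod_eq_sum sum_abs[THEN order_trans] abs_mult)
  also have "\<dots> \<le> L2_set (($) x) {..<n} * L2_set (($) y) {..<n}"
    by (rule L2_set_mult_ineq)
  finally show ?thesis
    using assms by (simp add: sqrt_scalar_prod_self_eq_L2_set)
qed

lemma scalar_prod_square_le:
  fixes x y :: "real vec"
  assumes "x \<in> carrier_vec n" "y \<in> carrier_vec n"
  shows "(x \<bullet> y)\<^sup>2 \<le> (x \<bullet> x) * (y \<bullet> y)"
proof -
  have "\<bar>x \<bullet> y\<bar>\<^sup>2 \<le> (sqrt (x \<bullet> x) * sqrt (y \<bullet> y))\<^sup>2"
    using abs_scalar_prod_le[OF assms] by (intro power_mono) auto
  then show ?thesis
    by (simp add: power_mult_distrib scalar_prod_self_nonneg)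
qed

lemma sqrt_scalar_prod_add_le:
  fixes x y :: "real vec"
  assumes "x \<in> carrier_vec n" "y \<in> carrier_vec n"
  shows "sqrt ((x + y) \<bullet> (x + y)) \<le> sqrt (x \<bullet> x) + sqrt (y \<bullet> y)"
proof -
  have "sqrt ((x + y) \<bullet> (x + y)) = L2_set (\<lambda>k. x $ k + y $ k) {..<n}"
    using assms by (simp add: sqrt_scalar_prod_self_eq_L2_set[of _ n] L2_set_def)
  also have "\<dots> \<le> L2_set (($) x) {..<n} + L2_set (($) y) {..<n}"
    by (rule L2_set_triangle_ineq)
  finally show ?thesis
    using assms by (simp add: sqrt_scalar_prod_self_eq_L2_set)
qed

lemma sqrt_scalar_prod_add_smult_le:
  fixes x y :: "real vec"
  assumes x: "x \<in> carrier_vec n" and y: "y \<in> carrier_vec n"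
  shows "sqrt ((x + k \<cdot>\<^sub>v y) \<bullet> (x + k \<cdot>\<^sub>v y)) \<le> sqrt (x \<bullet> x) + \<bar>k\<bar> * sqrt (y \<bullet> y)"
proof -
  have "(k \<cdot>\<^sub>v y) \<bullet> (k \<cdot>\<^sub>v y) = k\<^sup>2 * (y \<bullet> y)"
    using y by (simp add: power2_eq_square)
  then have norm_smult: "sqrt ((k \<cdot>\<^sub>v y) \<bullet> (k \<cdot>\<^sub>v y)) = \<bar>k\<bar> * sqrt (y \<bullet> y)"
    by (simp only: real_sqrt_mult real_sqrt_abs)
  have "sqrt ((x + k \<cdot>\<^sub>v y) \<bullet> (x + k \<cdot>\<^sub>v y)) \<le> sqrt (x \<bullet> x) + sqrt ((k \<cdot>\<^sub>v y) \<bullet> (k \<cdot>\<^sub>v y))"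
    by (rule sqrt_scalar_prod_add_le[OF x]) (use y in simp)
  then show ?thesis
    unfolding norm_smult .
qed

lemma bessel_orthonormal_pair:
  fixes u z v :: "real vec"
  assumes u: "u \<in> carrier_vec n" and z: "z \<in> carrier_vec n" "z \<bullet> z = 1"
    and v: "v \<in> carrier_vec n" "v \<bullet> v = 1" and vz: "v \<bullet> z = 0"
  shows "(u \<bullet> z)\<^sup>2 + (u \<bullet> v)\<^sup>2 \<le> u \<bullet> u"
proof -
  define r where "r = u - (u \<bullet> z) \<cdot>\<^sub>v z - (u \<bullet> v) \<cdot>\<^sub>v v"
  have r: "r \<in> carrier_vec n"
    using u z v by (simp add: r_def)
  have zv: "z \<bullet> v = 0"
    using vz z v by (simp add: comm_scalar_prod[of _ n])
  have "r \<bullet> r = u \<bullet> u - (u \<bullet> z)\<^sup>2 - (u \<bullet> v)\<^sup>2"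
    using u z v vz zv
    by (simp add: r_def minus_scalar_prod_distrib[of _ n] scalar_prod_minus_distrib[of _ n]
        comm_scalar_prod[of z n u] comm_scalar_prod[of v n u] power2_eq_square algebra_simps)
  then show ?thesis
    using scalar_prod_self_nonneg[of r] by simp
qed

lemma sum_power4_le_square_sum:
  fixes f :: "'a \<Rightarrow> real"
  assumes "finite K"
  shows "(\<Sum>k\<in>K. f k ^ 4) \<le> (\<Sum>k\<in>K. (f k)\<^sup>2)\<^sup>2"
proof -
  have "f k ^ 4 \<le> (f k)\<^sup>2 * (\<Sum>j\<in>K. (f j)\<^sup>2)" if "k \<in> K" for k
  proof -
    have "(f k)\<^sup>2 * (f k)\<^sup>2 \<le> (f k)\<^sup>2 * (\<Sum>j\<in>K. (f j)\<^sup>2)"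
      using member_le_sum[of k K "\<lambda>j. (f j)\<^sup>2"] assms that by (intro mult_left_mono) auto
    then show ?thesis
      by (simp add: power4_eq_xxxx power2_eq_square mult.assoc)
  qed
  then have "(\<Sum>k\<in>K. f k ^ 4) \<le> (\<Sum>k\<in>K. (f k)\<^sup>2 * (\<Sum>j\<in>K. (f j)\<^sup>2))"
    by (rule sum_mono)
  then show ?thesis
    by (simp add: power2_eq_square[of "sum _ _"] sum_distrib_right)
qed

lemma vec_entry_square_le:
  fixes z :: "real vec"
  assumes "z \<in> carrier_vec n" "k < n"
  shows "(z $ k)\<^sup>2 \<le> z \<bullet> z"
  using member_le_sum[of k "{..<n}" "\<lambda>j. (z $ j)\<^sup>2"] assms
  by (simp add: scalar_prod_eq_sum[of _ n] power2_eq_square)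

lemma sum_vec_entry_power4_le:
  fixes z :: "real vec"
  assumes "z \<in> carrier_vec n"
  shows "(\<Sum>k<n. (z $ k) ^ 4) \<le> (z \<bullet> z)\<^sup>2"
  using sum_power4_le_square_sum[of "{..<n}" "($) z"] assms
  by (simp add: scalar_prod_eq_sum[of _ n] power2_eq_square)

lemma square_mult_square_le: "16 * (a\<^sup>2 * b\<^sup>2) \<le> (a + b) ^ 4 + (a - b) ^ 4" for a b :: real
proof -
  have "(a + b) ^ 4 + (a - b) ^ 4 - 16 * (a\<^sup>2 * b\<^sup>2) = 2 * (a\<^sup>2 - b\<^sup>2)\<^sup>2"
    by (simp add: eval_nat_numeral algebra_simps)
  then show ?thesis
    using zero_le_power2[of "a\<^sup>2 - b\<^sup>2"] by linarith
qed

lemma sum_square_mult_square_orthonormal: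
  fixes z v :: "real vec"
  assumes z: "z \<in> carrier_vec n" "z \<bullet> z = 1" and v: "v \<in> carrier_vec n" "v \<bullet> v = 1"
    and vz: "v \<bullet> z = 0"
  shows "(\<Sum>k<n. (z $ k)\<^sup>2 * (v $ k)\<^sup>2) \<le> 1 / 2"
proof -
  have zz: "(\<Sum>k<n. (z $ k)\<^sup>2) = 1" and vv: "(\<Sum>k<n. (v $ k)\<^sup>2) = 1"
    and zv: "(\<Sum>k<n. z $ k * v $ k) = 0"
    using z v vz by (simp_all add: scalar_prod_eq_sum[of _ n] power2_eq_square mult.commute)
  have "(\<Sum>k<n. (z $ k + v $ k)\<^sup>2) = 2" "(\<Sum>k<n. (z $ k - v $ k)\<^sup>2) = 2"
    by (simp_all add: power2_sum power2_diff sum.distrib sum_subtractf zz vv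
        mult.assoc flip: sum_distrib_left, simp_all add: zv)
  then have "(\<Sum>k<n. (z $ k + v $ k) ^ 4) \<le> 4" "(\<Sum>k<n. (z $ k - v $ k) ^ 4) \<le> 4"
    using sum_power4_le_square_sum[of "{..<n}" "\<lambda>k. z $ k + v $ k"]
      sum_power4_le_square_sum[of "{..<n}" "\<lambda>k. z $ k - v $ k"] by simp_all
  moreover have "16 * (\<Sum>k<n. (z $ k)\<^sup>2 * (v $ k)\<^sup>2)
      \<le> (\<Sum>k<n. (z $ k + v $ k) ^ 4) + (\<Sum>k<n. (z $ k - v $ k) ^ 4)"
    unfolding sum_distrib_left sum.distrib[symmetric] by (intro sum_mono square_mult_square_le)
  ultimately show ?thesis
    by linarith
qed

section \<open>Spectral theorem for real symmetric matrices\<close>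

lemma smult_mat_mult_vec:
  "A \<in> carrier_mat nr nc \<Longrightarrow> v \<in> carrier_vec nc \<Longrightarrow> (k \<cdot>\<^sub>m A) *\<^sub>v v = k \<cdot>\<^sub>v (A *\<^sub>v v)"
  by (rule eq_vecI) (auto simp: scalar_prod_def sum_distrib_left ac_simps)

lemma scalar_prod_symmetric_mat:
  fixes A :: "'a :: comm_semiring_0 mat"
  assumes "A \<in> carrier_mat n n" "A\<^sup>T = A" "x \<in> carrier_vec n" "y \<in> carrier_vec n"
  shows "x \<bullet> (A *\<^sub>v y) = y \<bullet> (A *\<^sub>v x)"
  using transpose_vec_mult_scalar[of A n n y x] assms by (simp add: comm_scalar_prod[of _ n])

lemma eq_mat_by_mult_vec:
  fixes A B :: "'a :: semiring_1 mat"
  assumes A: "A \<in> carrier_mat nr nc" and B: "B \<in> carrier_mat nr nc"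
    and AB: "\<And>x. x \<in> carrier_vec nc \<Longrightarrow> A *\<^sub>v x = B *\<^sub>v x"
  shows "A = B"
proof (rule eq_matI)
  fix i j assume ij: "i < dim_row B" "j < dim_col B"
  have entry: "(M *\<^sub>v unit_vec nc j) $ i = M $$ (i, j)" if "M \<in> carrier_mat nr nc" for M :: "'a mat"
  proof -
    have "row M i \<bullet> unit_vec nc j = row M i $ j"
      using ij B by (intro scalar_prod_right_unit) simp
    then show ?thesis
      using that ij B by simp
  qed
  show "A $$ (i, j) = B $$ (i, j)"
    using entry[OF A] entry[OF B] AB[of "unit_vec nc j"] by simp
qed (use A B in auto)

lemma conjugate_of_real_mat_mult_vec:
  fixes A :: "real mat"
  assumes "A \<in> carrier_mat n n" "v \<in> carrier_vec n"
  shows "conjugate (map_mat complex_of_real A *\<^sub>v v) = map_mat complex_of_real A *\<^sub>v conjugate v"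
  using assms by (intro eq_vecI) (auto simp: scalar_prod_def sum_conjugate conjugate_dist_mul)

lemma real_symmetric_mat_real_eigenvalue:
  fixes A :: "real mat"
  assumes A: "A \<in> carrier_mat n n" and sym: "A\<^sup>T = A" and n: "n > 0"
  obtains \<mu> where "eigenvalue A \<mu>"
proof -
  define AC where "AC = map_mat complex_of_real A"
  have AC: "AC \<in> carrier_mat n n" using A by (simp add: AC_def)
  have symC: "AC\<^sup>T = AC"
    using sym unfolding AC_def by (metis map_mat_transpose)
  obtain as where "char_poly AC = (\<Prod>a\<leftarrow>as. [:- a, 1:])" "length as = n"
    using char_poly_factorized[OF AC] by blast
  then have root: "poly (char_poly AC) (as ! 0) = 0"
    using n by (auto simp: poly_prod_list prod_list_zero_iff)
  then obtain v where "eigenvector AC v (as ! 0)"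
    using eigenvalue_root_char_poly[OF AC] unfolding eigenvalue_def by blast
  then have v: "v \<in> carrier_vec n" "v \<noteq> 0\<^sub>v n" and Av: "AC *\<^sub>v v = as ! 0 \<cdot>\<^sub>v v"
    using AC unfolding eigenvector_def by auto
  define s where "s = conjugate v \<bullet> (AC *\<^sub>v v)"
  have "conjugate s = conjugate (conjugate v) \<bullet> conjugate (AC *\<^sub>v v)"
    unfolding s_def by (rule conjugate_sprod_vec[of _ n]) (use v AC in auto)
  also have "\<dots> = v \<bullet> (AC *\<^sub>v conjugate v)"
    unfolding AC_def using conjugate_of_real_mat_mult_vec[OF A v(1)] by simp
  also have "\<dots> = s"
    unfolding s_def using AC v symC by (simp add: scalar_prod_symmetric_mat[of AC n])
  finally have "Im s = 0"
    by (simp add: complex_eq_iff)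
  moreover have "s = as ! 0 * (v \<bullet>c v)"
    using v by (simp add: s_def Av comm_scalar_prod[of _ n])
  moreover have "Im (v \<bullet>c v) = 0" "Re (v \<bullet>c v) > 0"
    using conjugate_square_greater_0_vec[OF v(1)] v(2) by (simp_all add: less_complex_def)
  ultimately have "Im (as ! 0) = 0"
    by simp
  then have "as ! 0 = complex_of_real (Re (as ! 0))"
    by (simp add: complex_eq_iff)
  moreover have "poly (char_poly AC) (complex_of_real x) = complex_of_real (poly (char_poly A) x)"
    for x
    unfolding AC_def of_real_hom.char_poly_hom[OF A] by (rule of_real_hom.poly_map_poly)
  ultimately have "poly (char_poly A) (Re (as ! 0)) = 0"
    using root by (metis of_real_eq_0_iff)
  then show ?thesis
    using that eigenvalue_root_char_poly[OF A] by blast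
qed

lemma real_eigenvalue_unit_eigenvector:
  fixes A :: "real mat"
  assumes A: "A \<in> carrier_mat n n" and "eigenvalue A \<mu>"
  obtains u where "u \<in> carrier_vec n" "u \<bullet> u = 1" "A *\<^sub>v u = \<mu> \<cdot>\<^sub>v u"
proof -
  obtain v where v: "v \<in> carrier_vec n" "v \<noteq> 0\<^sub>v n" and Av: "A *\<^sub>v v = \<mu> \<cdot>\<^sub>v v"
    using assms unfolding eigenvalue_def eigenvector_def by auto
  have vv: "v \<bullet> v > 0"
    using conjugate_square_greater_0_vec[OF v(1)] v(2) by simp
  define u where "u = (1 / sqrt (v \<bullet> v)) \<cdot>\<^sub>v v"
  have "u \<bullet> u = 1"
    using v vv by (simp add: u_def power2_eq_square[symmetric])
  moreover have "A *\<^sub>v u = \<mu> \<cdot>\<^sub>v u"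
    using A v Av by (simp add: u_def mult_mat_vec smult_smult_assoc mult.commute)
  moreover have "u \<in> carrier_vec n"
    using v by (simp add: u_def)
  ultimately show ?thesis
    using that by blast
qed

definition outer_mat :: "nat \<Rightarrow> real vec \<Rightarrow> real mat" where
  "outer_mat n w = mat n n (\<lambda>(i, j). w $ i * w $ j)"

lemma outer_mat_mult_vec:
  "w \<in> carrier_vec n \<Longrightarrow> x \<in> carrier_vec n \<Longrightarrow> outer_mat n w *\<^sub>v x = (w \<bullet> x) \<cdot>\<^sub>v w"
  by (rule eq_vecI) (auto simp: outer_mat_def scalar_prod_def sum_distrib_left ac_simps)

definition householder_mat :: "nat \<Rightarrow> real vec \<Rightarrow> real mat" where
  "householder_mat n w = 1\<^sub>m n - (2 / (w \<bullet> w)) \<cdot>\<^sub>m outer_mat n w"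

lemma householder_mat_carrier [simp]: "householder_mat n w \<in> carrier_mat n n"
  unfolding householder_mat_def by (intro minus_carrier_mat) (auto simp: outer_mat_def)

lemma householder_mat_symmetric: "(householder_mat n w)\<^sup>T = householder_mat n w"
  by (rule eq_matI) (auto simp: householder_mat_def outer_mat_def)

lemma householder_mat_mult_vec:
  assumes w: "w \<in> carrier_vec n" and x: "x \<in> carrier_vec n"
  shows "householder_mat n w *\<^sub>v x = x - (2 * (w \<bullet> x) / (w \<bullet> w)) \<cdot>\<^sub>v w"
proof -
  have O: "outer_mat n w \<in> carrier_mat n n"
    by (simp add: outer_mat_def)
  have "householder_mat n w *\<^sub>v x = x - (2 / (w \<bullet> w)) \<cdot>\<^sub>v (outer_mat n w *\<^sub>v x)"
    unfolding householder_mat_def using O x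
    by (simp add: minus_mult_distrib_mat_vec[of _ n n] smult_mat_mult_vec[of _ n n])
  then show ?thesis
    using w x by (simp add: outer_mat_mult_vec smult_smult_assoc)
qed

lemma householder_mat_involutive:
  assumes w: "w \<in> carrier_vec n" and w0: "w \<bullet> w \<noteq> 0"
  shows "householder_mat n w * householder_mat n w = 1\<^sub>m n"
proof (rule eq_mat_by_mult_vec[of _ n n])
  fix x :: "real vec" assume x: "x \<in> carrier_vec n"
  let ?H = "householder_mat n w"
  have wHx: "w \<bullet> (?H *\<^sub>v x) = - (w \<bullet> x)"
    using w w0 x by (simp add: householder_mat_mult_vec scalar_prod_minus_distrib[of _ n])
  have "(?H * ?H) *\<^sub>v x = ?H *\<^sub>v (?H *\<^sub>v x)"
    using x by (simp add: assoc_mult_mat_vec[of _ n n _ n])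
  also have "\<dots> = ?H *\<^sub>v x - (2 * (w \<bullet> (?H *\<^sub>v x)) / (w \<bullet> w)) \<cdot>\<^sub>v w"
    by (rule householder_mat_mult_vec[OF w]) (use x in \<open>simp add: mult_mat_vec_carrier[of _ n n]\<close>)
  also have "\<dots> = x"
    unfolding wHx unfolding householder_mat_mult_vec[OF w x] using w x
    by (intro eq_vecI) (simp_all add: field_simps)
  finally show "(?H * ?H) *\<^sub>v x = 1\<^sub>m n *\<^sub>v x"
    by (simp only: one_mult_mat_vec[OF x])
qed (simp_all add: mult_carrier_mat[OF householder_mat_carrier householder_mat_carrier])

lemma householder_mat_swap:
  assumes u: "u \<in> carrier_vec n" "u \<bullet> u = 1" and e: "e \<in> carrier_vec n" "e \<bullet> e = 1"
    and ue: "u \<bullet> e \<noteq> 1"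
  defines "H \<equiv> householder_mat n (u - e)"
  shows "H * H = 1\<^sub>m n" "H *\<^sub>v e = u" "H *\<^sub>v u = e"
proof -
  have eu: "e \<bullet> u = u \<bullet> e"
    using u e by (simp add: comm_scalar_prod[of _ n])
  have ww: "(u - e) \<bullet> (u - e) = 2 - 2 * (u \<bullet> e)" and we: "(u - e) \<bullet> e = u \<bullet> e - 1"
    using u e eu
    by (simp_all add: minus_scalar_prod_distrib[of _ n] scalar_prod_minus_distrib[of _ n])
  show HH: "H * H = 1\<^sub>m n"
    unfolding H_def using u e ue ww by (intro householder_mat_involutive) auto
  have "2 * ((u - e) \<bullet> e) / ((u - e) \<bullet> (u - e)) = -1"
    using ue by (simp add: ww we field_simps)
  then show He: "H *\<^sub>v e = u"
    unfolding H_def using u e by (intro eq_vecI) (auto simp: householder_mat_mult_vec[of _ n])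
  have "H \<in> carrier_mat n n"
    by (simp add: H_def)
  then have "H *\<^sub>v (H *\<^sub>v e) = e"
    using e HH by (simp flip: assoc_mult_mat_vec)
  then show "H *\<^sub>v u = e"
    by (simp only: He)
qed

lemma symmetric_mat_eigen_block:
  fixes B :: "'a :: comm_ring_1 mat"
  assumes B: "B \<in> carrier_mat (Suc n) (Suc n)" and sym: "B\<^sup>T = B"
    and Be: "B *\<^sub>v unit_vec (Suc n) 0 = \<mu> \<cdot>\<^sub>v unit_vec (Suc n) 0"
  defines "B' \<equiv> mat n n (\<lambda>(i, j). B $$ (Suc i, Suc j))"
  shows "B = four_block_mat (mat 1 1 (\<lambda>_. \<mu>)) (0\<^sub>m 1 n) (0\<^sub>m n 1) B'" and "B'\<^sup>T = B'"
proof -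
  have col0: "B $$ (k, 0) = (if k = 0 then \<mu> else 0)" if "k < Suc n" for k
    using arg_cong[OF Be, of "\<lambda>v. v $ k"] that B by simp
  have row0: "B $$ (0, k) = (if k = 0 then \<mu> else 0)" if "k < Suc n" for k
    using col0[OF that] arg_cong[OF sym, of "\<lambda>M. M $$ (k, 0)"] that B by simp
  show "B = four_block_mat (mat 1 1 (\<lambda>_. \<mu>)) (0\<^sub>m 1 n) (0\<^sub>m n 1) B'"
  proof (rule eq_matI)
    fix i j
    assume "i < dim_row (four_block_mat (mat 1 1 (\<lambda>_. \<mu>)) (0\<^sub>m 1 n) (0\<^sub>m n 1) B')"
      and "j < dim_col (four_block_mat (mat 1 1 (\<lambda>_. \<mu>)) (0\<^sub>m 1 n) (0\<^sub>m n 1) B')"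
    then have "i < Suc n" "j < Suc n"
      by (simp_all add: B'_def)
    then show "B $$ (i, j) = four_block_mat (mat 1 1 (\<lambda>_. \<mu>)) (0\<^sub>m 1 n) (0\<^sub>m n 1) B' $$ (i, j)"
      using col0 row0 by (cases i; cases j) (auto simp: B'_def)
  qed (use B in \<open>auto simp: B'_def\<close>)
  show "B'\<^sup>T = B'"
  proof (rule eq_matI)
    fix i j assume "i < dim_row B'" "j < dim_col B'"
    then show "B'\<^sup>T $$ (i, j) = B' $$ (i, j)"
      using B arg_cong[OF sym, of "\<lambda>M. M $$ (Suc i, Suc j)"] by (simp add: B'_def)
  qed (simp_all add: B'_def)
qed

lemma real_symmetric_mat_deflation:
  fixes A :: "real mat"
  assumes A: "A \<in> carrier_mat (Suc n) (Suc n)" and sym: "A\<^sup>T = A"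
  obtains H \<mu> A' where "H \<in> carrier_mat (Suc n) (Suc n)" "H\<^sup>T = H" "H * H = 1\<^sub>m (Suc n)"
    "A' \<in> carrier_mat n n" "A'\<^sup>T = A'"
    "H * A * H = four_block_mat (mat 1 1 (\<lambda>_. \<mu>)) (0\<^sub>m 1 n) (0\<^sub>m n 1) A'"
proof -
  let ?e = "unit_vec (Suc n) 0 :: real vec"
  obtain \<mu> where "eigenvalue A \<mu>"
    using real_symmetric_mat_real_eigenvalue[OF A sym] by blast
  then obtain u0 where u0: "u0 \<in> carrier_vec (Suc n)" "u0 \<bullet> u0 = 1" "A *\<^sub>v u0 = \<mu> \<cdot>\<^sub>v u0"
    using real_eigenvalue_unit_eigenvector[OF A] by blast
  \<comment> \<open>the reflection exchanging ?e and u needs u \<noteq> ?e\<close>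
  define u where "u = (if u0 $ 0 = 1 then -1 else 1) \<cdot>\<^sub>v u0"
  have u: "u \<in> carrier_vec (Suc n)" "u \<bullet> u = 1" and Au: "A *\<^sub>v u = \<mu> \<cdot>\<^sub>v u"
    using u0 A by (simp_all add: u_def mult_mat_vec smult_smult_assoc mult.commute)
  have ue: "u \<bullet> ?e \<noteq> 1"
    using u by (simp add: u_def)
  define H where "H = householder_mat (Suc n) (u - ?e)"
  have H: "H \<in> carrier_mat (Suc n) (Suc n)" and HT: "H\<^sup>T = H"
    by (simp_all add: H_def householder_mat_symmetric)
  have HH: "H * H = 1\<^sub>m (Suc n)" and He: "H *\<^sub>v ?e = u" and Hu: "H *\<^sub>v u = ?e"
    using householder_mat_swap[OF u _ _ ue] unfolding H_def by auto
  define B where "B = H * A * H"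
  have B: "B \<in> carrier_mat (Suc n) (Suc n)"
    using H A by (simp add: B_def)
  have "B\<^sup>T = H\<^sup>T * (A\<^sup>T * H\<^sup>T)"
    using H A by (simp add: B_def transpose_mult[of _ "Suc n" "Suc n" _ "Suc n"])
  then have BT: "B\<^sup>T = B"
    using H A HT sym by (simp add: B_def assoc_mult_mat[of _ "Suc n" "Suc n"])
  have "B *\<^sub>v ?e = H *\<^sub>v (A *\<^sub>v (H *\<^sub>v ?e))"
    using H A by (simp add: B_def assoc_mult_mat_vec[of _ "Suc n" "Suc n" _ "Suc n"])
  also have "\<dots> = \<mu> \<cdot>\<^sub>v ?e"
    using H u by (simp add: He Au Hu mult_mat_vec[of _ "Suc n" "Suc n"])
  finally have "B *\<^sub>v ?e = \<mu> \<cdot>\<^sub>v ?e" .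
  from symmetric_mat_eigen_block[OF B BT this] show ?thesis
    using that[OF H HT HH mat_carrier] unfolding B_def by blast
qed

lemma block_diagonal_orthogonal_diagonalization:
  fixes U' D' :: "real mat" and \<mu> :: real
  assumes U': "U' \<in> carrier_mat n n" and D': "D' \<in> carrier_mat n n"
    and U'U': "U'\<^sup>T * U' = 1\<^sub>m n" and diag: "diagonal_mat D'"
  defines "P \<equiv> four_block_mat (1\<^sub>m 1) (0\<^sub>m 1 n) (0\<^sub>m n 1) U'"
    and "D \<equiv> four_block_mat (mat 1 1 (\<lambda>_. \<mu>)) (0\<^sub>m 1 n) (0\<^sub>m n 1) D'"
  shows "P \<in> carrier_mat (Suc n) (Suc n)" "D \<in> carrier_mat (Suc n) (Suc n)"
    "P\<^sup>T * P = 1\<^sub>m (Suc n)" "diagonal_mat D"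
    "P * D * P\<^sup>T = four_block_mat (mat 1 1 (\<lambda>_. \<mu>)) (0\<^sub>m 1 n) (0\<^sub>m n 1) (U' * D' * U'\<^sup>T)"
proof -
  show "P \<in> carrier_mat (Suc n) (Suc n)" "D \<in> carrier_mat (Suc n) (Suc n)"
    using U' D' by (auto simp: P_def D_def)
  have PT: "P\<^sup>T = four_block_mat (1\<^sub>m 1) (0\<^sub>m 1 n) (0\<^sub>m n 1) U'\<^sup>T"
    using U' by (simp add: P_def transpose_four_block_mat[of _ 1 1 _ n _ n])
  have "P\<^sup>T * P = four_block_mat (1\<^sub>m 1) (0\<^sub>m 1 n) (0\<^sub>m n 1) (U'\<^sup>T * U')"
    unfolding PT unfolding P_def using U'
    by (simp add: mult_four_block_mat[of _ 1 1 _ n _ n _ _ 1 _ n])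
  also have "\<dots> = 1\<^sub>m (Suc n)"
    unfolding U'U' by (rule eq_matI) auto
  finally show "P\<^sup>T * P = 1\<^sub>m (Suc n)" .
  show "diagonal_mat D"
    using diag D' by (auto simp: diagonal_mat_def D_def)
  have "P * D = four_block_mat (mat 1 1 (\<lambda>_. \<mu>)) (0\<^sub>m 1 n) (0\<^sub>m n 1) (U' * D')"
    unfolding P_def D_def using U' D' by (simp add: mult_four_block_mat[of _ 1 1 _ n _ n _ _ 1 _ n])
  then show "P * D * P\<^sup>T = four_block_mat (mat 1 1 (\<lambda>_. \<mu>)) (0\<^sub>m 1 n) (0\<^sub>m n 1) (U' * D' * U'\<^sup>T)"
    unfolding PT using U' D' by (simp add: mult_four_block_mat[of _ 1 1 _ n _ n _ _ 1 _ n])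
qed

theorem real_symmetric_mat_spectral:
  fixes A :: "real mat"
  assumes "A \<in> carrier_mat n n" "A\<^sup>T = A"
  obtains U D where "U \<in> carrier_mat n n" "D \<in> carrier_mat n n" "U\<^sup>T * U = 1\<^sub>m n"
    "diagonal_mat D" "A = U * D * U\<^sup>T"
  using assms
proof (induction n arbitrary: A thesis)
  case 0
  then show ?case
    by (intro 0(1)[of "1\<^sub>m 0" A]) (auto simp: diagonal_mat_def)
next
  case (Suc n A)
  obtain H \<mu> A' where H: "H \<in> carrier_mat (Suc n) (Suc n)" and HT: "H\<^sup>T = H"
    and HH: "H * H = 1\<^sub>m (Suc n)" and A': "A' \<in> carrier_mat n n" "A'\<^sup>T = A'"
    and HAH: "H * A * H = four_block_mat (mat 1 1 (\<lambda>_. \<mu>)) (0\<^sub>m 1 n) (0\<^sub>m n 1) A'"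
    using real_symmetric_mat_deflation[OF Suc.prems(2,3)] by metis
  obtain U' D' where U': "U' \<in> carrier_mat n n" "D' \<in> carrier_mat n n" "U'\<^sup>T * U' = 1\<^sub>m n"
    "diagonal_mat D'" and A'_eq: "A' = U' * D' * U'\<^sup>T"
    using Suc.IH[OF _ A'] by blast
  obtain P D where P: "P \<in> carrier_mat (Suc n) (Suc n)" and D: "D \<in> carrier_mat (Suc n) (Suc n)"
    and PP: "P\<^sup>T * P = 1\<^sub>m (Suc n)" and diag: "diagonal_mat D" and PDP: "P * D * P\<^sup>T = H * A * H"
    using block_diagonal_orthogonal_diagonalization[OF U'] unfolding HAH A'_eq by blast
  have HPT: "(H * P)\<^sup>T = P\<^sup>T * H"
    using H P HT by (simp add: transpose_mult[of _ "Suc n" "Suc n" _ "Suc n"])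
  have "(H * P)\<^sup>T * (H * P) = P\<^sup>T * ((H * H) * P)"
    unfolding HPT using H P by (simp add: assoc_mult_mat[of _ "Suc n" "Suc n" _ "Suc n" _ "Suc n"])
  then have orth: "(H * P)\<^sup>T * (H * P) = 1\<^sub>m (Suc n)"
    using P PP by (simp add: HH)
  have "H * P * D * (H * P)\<^sup>T = H * (P * D * P\<^sup>T) * H"
    unfolding HPT using H P D
    by (simp add: assoc_mult_mat[of _ "Suc n" "Suc n" _ "Suc n" _ "Suc n"])
  also have "\<dots> = (H * H) * A * (H * H)"
    using H Suc.prems(2) by (simp add: PDP assoc_mult_mat[of _ "Suc n" "Suc n" _ "Suc n" _ "Suc n"])
  also have "\<dots> = A"
    using Suc.prems(2) by (simp add: HH)
  finally show ?case
    using Suc.prems(1) H P D diag orth by (metis mult_carrier_mat)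
qed

section \<open>The two lowest eigenvalues\<close>

lemma proots_prod_linear_factors: "proots (\<Prod>a\<leftarrow>xs. [:- a, 1:]) = mset (xs :: 'a :: idom list)"
proof (induction xs)
  case (Cons a xs)
  have "(\<Prod>a\<leftarrow>xs. [:- a, 1:]) \<noteq> (0 :: 'a poly)"
    by (auto simp: prod_list_zero_iff)
  then show ?case
    using Cons by (simp add: proots_mult del: mult_pCons_left)
qed simp

lemma eigs_antimono:
  assumes "i \<le> j" "j < length (eigs A)"
  shows "eigs A ! j \<le> eigs A ! i"
proof -
  have "sorted_wrt (\<ge>) (eigs A)"
    by (simp add: eigs_def sorted_wrt_rev)
  then show ?thesis
    using assms by (cases "i = j") (auto simp: sorted_wrt_iff_nth_less)
qed

lemma eigs_orthogonal_diagonalization: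
  fixes A :: "real mat"
  assumes U: "U \<in> carrier_mat n n" and D: "D \<in> carrier_mat n n" and UU: "U\<^sup>T * U = 1\<^sub>m n"
    and diag: "diagonal_mat D" and A: "A = U * D * U\<^sup>T"
  shows "eigs A = rev (sort (diag_mat D))"
proof -
  have "U * U\<^sup>T = 1\<^sub>m n"
    using mat_mult_left_right_inverse[OF _ U UU] U by simp
  then have "similar_mat A D"
    unfolding similar_mat_def similar_mat_wit_def
    using U D UU A by (intro exI[of _ U] exI[of _ "U\<^sup>T"]) (auto simp: Let_def)
  moreover have "upper_triangular D"
    using diag D by (auto simp: diagonal_mat_def upper_triangular_def)
  ultimately have "char_poly A = (\<Prod>a\<leftarrow>diag_mat D. [:- a, 1:])"
    using char_poly_similar char_poly_upper_triangular[OF D] by metis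
  then show ?thesis
    by (simp add: eigs_def proots_prod_linear_factors sorted_list_of_multiset_mset)
qed

lemma length_eigs_real_symmetric:
  fixes A :: "real mat"
  assumes "A \<in> carrier_mat n n" "A\<^sup>T = A"
  shows "length (eigs A) = n"
proof -
  obtain U D where "U \<in> carrier_mat n n" "D \<in> carrier_mat n n" "U\<^sup>T * U = 1\<^sub>m n"
    "diagonal_mat D" "A = U * D * U\<^sup>T"
    using real_symmetric_mat_spectral[OF assms] .
  then show ?thesis
    by (simp add: eigs_orthogonal_diagonalization diag_mat_def)
qed

lemma orthogonal_mat_parseval:
  fixes U :: "real mat"
  assumes U: "U \<in> carrier_mat n n" and UU: "U\<^sup>T * U = 1\<^sub>m n" and x: "x \<in> carrier_vec n"
  shows "x \<bullet> x = (\<Sum>i<n. (col U i \<bullet> x)\<^sup>2)"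
proof -
  have "U * U\<^sup>T = 1\<^sub>m n"
    using mat_mult_left_right_inverse[OF _ U UU] U by simp
  then have "x \<bullet> x = x \<bullet> (U *\<^sub>v (U\<^sup>T *\<^sub>v x))"
    using U x by (simp flip: assoc_mult_mat_vec)
  also have "\<dots> = (U\<^sup>T *\<^sub>v x) \<bullet> (U\<^sup>T *\<^sub>v x)"
    using U x by (simp add: transpose_vec_mult_scalar[of U n n] comm_scalar_prod[of _ n])
  also have "\<dots> = (\<Sum>i<n. (col U i \<bullet> x)\<^sup>2)"
    using U x by (simp add: scalar_prod_eq_sum[of _ n] power2_eq_square)
  finally show ?thesis .
qed

lemma orthogonal_diagonalization_quadratic_form:
  fixes A :: "real mat"
  assumes U: "U \<in> carrier_mat n n" and D: "D \<in> carrier_mat n n"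
    and diag: "diagonal_mat D" and A: "A = U * D * U\<^sup>T" and x: "x \<in> carrier_vec n"
  shows "x \<bullet> (A *\<^sub>v x) = (\<Sum>i<n. D $$ (i, i) * (col U i \<bullet> x)\<^sup>2)"
proof -
  define y where "y = U\<^sup>T *\<^sub>v x"
  have y: "y \<in> carrier_vec n" and yi: "\<And>i. i < n \<Longrightarrow> y $ i = col U i \<bullet> x"
    using U x by (auto simp: y_def)
  have Dy: "(D *\<^sub>v y) $ i = D $$ (i, i) * y $ i" if "i < n" for i
  proof -
    have "(D *\<^sub>v y) $ i = (\<Sum>j\<in>{0..<n}. D $$ (i, j) * y $ j)"
      using D y that by (simp add: scalar_prod_def)
    also have "\<dots> = (\<Sum>j\<in>{0..<n}. if j = i then D $$ (i, i) * y $ i else 0)"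
      using D diag that by (intro sum.cong) (auto simp: diagonal_mat_def)
    finally show ?thesis
      using that by simp
  qed
  have "x \<bullet> (A *\<^sub>v x) = x \<bullet> (U *\<^sub>v (D *\<^sub>v y))"
    using U D x by (simp add: A y_def assoc_mult_mat_vec[of _ n n _ n])
  also have "\<dots> = y \<bullet> (D *\<^sub>v y)"
    using U D x by (simp add: y_def transpose_vec_mult_scalar[of U n n] comm_scalar_prod[of _ n])
  also have "\<dots> = (\<Sum>i<n. y $ i * (D *\<^sub>v y) $ i)"
    by (rule scalar_prod_eq_sum) (use y D in auto)
  also have "\<dots> = (\<Sum>i<n. D $$ (i, i) * (col U i \<bullet> x)\<^sup>2)"
    by (rule sum.cong) (simp_all add: Dy yi power2_eq_square)
  finally show ?thesis .
qed

lemma orthogonal_diagonalization_eigenvector: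
  fixes A :: "real mat"
  assumes U: "U \<in> carrier_mat n n" and D: "D \<in> carrier_mat n n" and UU: "U\<^sup>T * U = 1\<^sub>m n"
    and diag: "diagonal_mat D" and A: "A = U * D * U\<^sup>T" and i: "i < n"
  shows "A *\<^sub>v col U i = D $$ (i, i) \<cdot>\<^sub>v col U i"
proof -
  have "col U i = U *\<^sub>v unit_vec n i"
    using U i by (intro eq_vecI) auto
  moreover have "col D i = D $$ (i, i) \<cdot>\<^sub>v unit_vec n i"
    using D diag i by (intro eq_vecI) (auto simp: diagonal_mat_def)
  ultimately have "U *\<^sub>v col D i = D $$ (i, i) \<cdot>\<^sub>v col U i"
    using U by (simp add: mult_mat_vec[of _ n n])
  moreover have "A * U = U * D"
    using U D UU by (simp add: A assoc_mult_mat[of _ n n _ n _ n])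
  ultimately show ?thesis
    using col_mult2[OF _ U i, of A n] col_mult2[OF U D i] A U D by simp
qed

lemma orthogonal_diagonalization_quadratic_form_ge:
  fixes A :: "real mat"
  assumes U: "U \<in> carrier_mat n n" and D: "D \<in> carrier_mat n n" and UU: "U\<^sup>T * U = 1\<^sub>m n"
    and diag: "diagonal_mat D" and A: "A = U * D * U\<^sup>T"
    and m: "\<And>i. i < n \<Longrightarrow> i \<noteq> i0 \<Longrightarrow> m \<le> D $$ (i, i)"
    and x: "x \<in> carrier_vec n" and xu: "x \<bullet> col U i0 = 0"
  shows "m * (x \<bullet> x) \<le> x \<bullet> (A *\<^sub>v x)"
proof -
  have "m * (col U i \<bullet> x)\<^sup>2 \<le> D $$ (i, i) * (col U i \<bullet> x)\<^sup>2" if "i < n" for i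
  proof (cases "i = i0")
    case True
    then show ?thesis
      using x U xu that by (simp add: comm_scalar_prod[of _ n])
  next
    case False
    then show ?thesis
      using m[OF that] by (intro mult_right_mono) auto
  qed
  then have "(\<Sum>i<n. m * (col U i \<bullet> x)\<^sup>2) \<le> (\<Sum>i<n. D $$ (i, i) * (col U i \<bullet> x)\<^sup>2)"
    by (intro sum_mono) auto
  then show ?thesis
    using orthogonal_mat_parseval[OF U UU x]
      orthogonal_diagonalization_quadratic_form[OF U D diag A x]
    by (simp add: sum_distrib_left)
qed

lemma sort_second_le_others:
  fixes xs :: "'a :: linorder list"
  assumes "xs \<noteq> []"
  obtains i0 where "i0 < length xs" "xs ! i0 = sort xs ! 0"
    "\<And>i. i < length xs \<Longrightarrow> i \<noteq> i0 \<Longrightarrow> sort xs ! 1 \<le> xs ! i"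
proof -
  obtain p where p: "p permutes {..<length xs}" and perm: "permute_list p xs = sort xs"
    using mset_eq_permutation[of "sort xs" xs] by auto
  have sort_p: "sort xs ! k = xs ! p k" if "k < length xs" for k
    using that p by (simp add: perm[symmetric] permute_list_nth)
  have p0: "p 0 < length xs"
    using assms permutes_in_image[OF p] by simp
  show ?thesis
  proof (rule that[OF p0])
    show "xs ! p 0 = sort xs ! 0"
      using sort_p assms by simp
    fix i assume i: "i < length xs" "i \<noteq> p 0"
    obtain k where k: "k < length xs" "p k = i"
      using i permutes_image[OF p] by (metis imageE lessThan_iff)
    then have "k \<noteq> 0"
      using i by metis
    then have "sort xs ! 1 \<le> sort xs ! k"
      using k by (intro sorted_nth_mono) auto
    then show "sort xs ! 1 \<le> xs ! i"
      using sort_p[OF k(1)] k(2) by simp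
  qed
qed

lemma real_symmetric_mat_bottom_eigenvector:
  fixes A :: "real mat"
  assumes A: "A \<in> carrier_mat n n" and sym: "A\<^sup>T = A" and n: "2 \<le> n"
  obtains u where "u \<in> carrier_vec n" "u \<bullet> u = 1" "A *\<^sub>v u = eigs A ! (n - 1) \<cdot>\<^sub>v u"
    "\<And>x. x \<in> carrier_vec n \<Longrightarrow> x \<bullet> u = 0 \<Longrightarrow> eigs A ! (n - 2) * (x \<bullet> x) \<le> x \<bullet> (A *\<^sub>v x)"
proof -
  obtain U D where U: "U \<in> carrier_mat n n" and D: "D \<in> carrier_mat n n"
    and UU: "U\<^sup>T * U = 1\<^sub>m n" and diag: "diagonal_mat D" and AUD: "A = U * D * U\<^sup>T"
    using real_symmetric_mat_spectral[OF A sym] .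
  define \<nu> where "\<nu> = sort (diag_mat D)"
  have len: "length (diag_mat D) = n"
    using D by (simp add: diag_mat_def)
  obtain i0 where i0: "i0 < n" and bottom: "D $$ (i0, i0) = \<nu> ! 0"
    and others: "\<And>i. i < n \<Longrightarrow> i \<noteq> i0 \<Longrightarrow> \<nu> ! 1 \<le> D $$ (i, i)"
    using sort_second_le_others[of "diag_mat D"] len n D by (auto simp: \<nu>_def diag_mat_def)
  have "eigs A = rev \<nu>"
    unfolding \<nu>_def by (rule eigs_orthogonal_diagonalization[OF U D UU diag AUD])
  then have eigs: "eigs A ! (n - 1) = \<nu> ! 0" "eigs A ! (n - 2) = \<nu> ! 1"
    using n len by (simp_all add: rev_nth \<nu>_def)
  define u where "u = col U i0"
  have u: "u \<in> carrier_vec n"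
    using U by (simp add: u_def carrier_vecI)
  moreover have "u \<bullet> u = 1"
    using arg_cong[OF UU, of "\<lambda>M. M $$ (i0, i0)"] U i0 by (simp add: u_def)
  moreover have "A *\<^sub>v u = eigs A ! (n - 1) \<cdot>\<^sub>v u"
    unfolding eigs u_def bottom[symmetric]
    by (rule orthogonal_diagonalization_eigenvector[OF U D UU diag AUD i0])
  moreover have "\<nu> ! 1 * (x \<bullet> x) \<le> x \<bullet> (A *\<^sub>v x)" if "x \<in> carrier_vec n" "x \<bullet> u = 0" for x
    using orthogonal_diagonalization_quadratic_form_ge[OF U D UU diag AUD others] that
    by (simp add: u_def)
  ultimately show ?thesis
    using that eigs by simp
qed

section \<open>Riemannian gradient and Hessian on the sphere\<close>

(* For unit z: the projection onto the tangent space at z of the gradient (z\<^sub>k\<^sup>3)\<^sub>k of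
   \<Sum>\<^sub>k z\<^sub>k\<^sup>4/4, just as rayleigh_residual A z is the projection of Az. *)

definition quartic_residual :: "real vec \<Rightarrow> real vec" where
  "quartic_residual z = vec (dim_vec z) (\<lambda>k. (z $ k) ^ 3 - (\<Sum>j<dim_vec z. (z $ j) ^ 4) * z $ k)"

lemma quartic_residual_carrier [simp]: "z \<in> carrier_vec n \<Longrightarrow> quartic_residual z \<in> carrier_vec n"
  by (simp add: quartic_residual_def)

lemma quartic_residual_norm_le:
  fixes z :: "real vec"
  assumes z: "z \<in> carrier_vec n" "z \<bullet> z = 1"
  shows "sqrt (quartic_residual z \<bullet> quartic_residual z) \<le> 1 / 2"
proof -
  define q where "q = (\<Sum>k<n. (z $ k) ^ 4)"
  have sz: "(\<Sum>k<n. (z $ k)\<^sup>2) = 1"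
    using z by (simp add: scalar_prod_eq_sum[of _ n] power2_eq_square)
  have z6: "(z $ k) ^ 6 \<le> (z $ k) ^ 4" if "k < n" for k
    using vec_entry_square_le[OF z(1) that] z(2) mult_right_mono[of "(z $ k)\<^sup>2" 1 "(z $ k) ^ 4"]
    by (simp add: power_add[of _ 2 4, simplified])
  have "quartic_residual z \<bullet> quartic_residual z = (\<Sum>k<n. ((z $ k) ^ 3 - q * z $ k)\<^sup>2)"
    using z by (simp add: quartic_residual_def scalar_prod_eq_sum[of _ n] q_def power2_eq_square)
  also have "\<dots> = (\<Sum>k<n. (z $ k) ^ 6 - 2 * q * (z $ k) ^ 4 + q\<^sup>2 * (z $ k)\<^sup>2)"
    by (rule sum.cong) (simp_all add: power2_eq_square eval_nat_numeral algebra_simps)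
  also have "\<dots> = (\<Sum>k<n. (z $ k) ^ 6) - 2 * q * q + q\<^sup>2 * (\<Sum>k<n. (z $ k)\<^sup>2)"
    unfolding q_def by (simp add: sum.distrib sum_subtractf sum_distrib_left)
  also have "\<dots> \<le> q - q\<^sup>2"
  proof -
    have "(\<Sum>k<n. (z $ k) ^ 6) \<le> q"
      unfolding q_def by (rule sum_mono) (use z6 in auto)
    then show ?thesis
      unfolding sz using power2_eq_square[of q] by linarith
  qed
  also have "\<dots> \<le> (1 / 2)\<^sup>2"
    using zero_le_power2[of "q - 1 / 2"] by (simp add: power2_eq_square algebra_simps)
  finally show ?thesis
    by (rule real_le_lsqrt[rotated]) simp
qed

definition rayleigh_residual :: "real mat \<Rightarrow> real vec \<Rightarrow> real vec" where
  "rayleigh_residual A z = A *\<^sub>v z - (z \<bullet> (A *\<^sub>v z)) \<cdot>\<^sub>v z"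

lemma rayleigh_residual_carrier:
  "A \<in> carrier_mat n n \<Longrightarrow> z \<in> carrier_vec n \<Longrightarrow> rayleigh_residual A z \<in> carrier_vec n"
  by (simp add: rayleigh_residual_def)

lemma mat_diag_mult_vec:
  "v \<in> carrier_vec n \<Longrightarrow> mat_diag n f *\<^sub>v v = vec n (\<lambda>k. f k * v $ k)"
  by (rule eq_vecI) (auto simp: mat_diag_def scalar_prod_def if_distrib if_distribR cong: if_cong)

lemma two_lambda_eq:
  "z \<in> carrier_vec n \<Longrightarrow> two_lambda A \<beta> z = z \<bullet> (A *\<^sub>v z) + 2 * \<beta> * (\<Sum>k<n. (z $ k) ^ 4)"
  by (simp add: two_lambda_def)

lemma grad_f_decomposition:
  assumes A: "A \<in> carrier_mat n n" and z: "z \<in> carrier_vec n"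
  shows "grad_f A \<beta> z = rayleigh_residual A z + (2 * \<beta>) \<cdot>\<^sub>v quartic_residual z"
proof -
  have "mat_diag n (\<lambda>k. (z $ k)\<^sup>2) *\<^sub>v z = vec n (\<lambda>k. (z $ k) ^ 3)"
    using z by (simp add: mat_diag_mult_vec power3_eq_cube power2_eq_square)
  then have "grad_f A \<beta> z = A *\<^sub>v z + (2 * \<beta>) \<cdot>\<^sub>v vec n (\<lambda>k. (z $ k) ^ 3) - two_lambda A \<beta> z \<cdot>\<^sub>v z"
    using A z
    by (simp add: grad_f_def add_mult_distrib_mat_vec[of _ n n] smult_mat_mult_vec[of _ n n])
  then show ?thesis
    using A z by (intro eq_vecI)
      (auto simp: two_lambda_eq rayleigh_residual_def quartic_residual_def algebra_simps)
qed

lemma hess_f_eq: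
  assumes A: "A \<in> carrier_mat n n" and z: "z \<in> carrier_vec n" and v: "v \<in> carrier_vec n"
  shows "hess_f A \<beta> z v
    = v \<bullet> (A *\<^sub>v v) + 6 * \<beta> * (\<Sum>k<n. (z $ k)\<^sup>2 * (v $ k)\<^sup>2) - two_lambda A \<beta> z * (v \<bullet> v)"
proof -
  let ?t = "two_lambda A \<beta> z"
  have "(A + 6 * \<beta> \<cdot>\<^sub>m mat_diag n (\<lambda>k. (z $ k)\<^sup>2) - ?t \<cdot>\<^sub>m 1\<^sub>m n) *\<^sub>v v
      = A *\<^sub>v v + (6 * \<beta>) \<cdot>\<^sub>v vec n (\<lambda>k. (z $ k)\<^sup>2 * v $ k) - ?t \<cdot>\<^sub>v v"
    using A v by (simp add: minus_mult_distrib_mat_vec[of _ n n] add_mult_distrib_mat_vec[of _ n n]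
        smult_mat_mult_vec[of _ n n] mat_diag_mult_vec)
  moreover have "v \<bullet> vec n (\<lambda>k. (z $ k)\<^sup>2 * v $ k) = (\<Sum>k<n. (z $ k)\<^sup>2 * (v $ k)\<^sup>2)"
    using v by (simp add: scalar_prod_eq_sum[of _ n] power2_eq_square ac_simps)
  ultimately show ?thesis
    using A z v
    by (simp add: hess_f_def scalar_prod_minus_distrib[of _ n] scalar_prod_add_distrib[of _ n])
qed

lemma hess_f_upper_bound:
  assumes A: "A \<in> carrier_mat n n" and z: "z \<in> carrier_vec n" "z \<bullet> z = 1"
    and v: "v \<in> carrier_vec n" "v \<bullet> v = 1" "v \<bullet> z = 0" and \<beta>: "0 \<le> \<beta>"
  shows "hess_f A \<beta> z v \<le> v \<bullet> (A *\<^sub>v v) - z \<bullet> (A *\<^sub>v z) + 3 * \<beta>"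
proof -
  have "6 * \<beta> * (\<Sum>k<n. (z $ k)\<^sup>2 * (v $ k)\<^sup>2) \<le> 3 * \<beta>"
    using mult_left_mono[OF sum_square_mult_square_orthonormal[OF z v] \<beta>] by simp
  moreover have "0 \<le> 2 * \<beta> * (\<Sum>k<n. (z $ k) ^ 4)"
    using \<beta> by (simp add: sum_nonneg)
  ultimately show ?thesis
    using hess_f_eq[OF A z(1) v(1)] v(2) by (simp add: two_lambda_eq[OF z(1)])
qed

lemma hess_f_lower_bound:
  assumes A: "A \<in> carrier_mat n n" and z: "z \<in> carrier_vec n" "z \<bullet> z = 1"
    and v: "v \<in> carrier_vec n" "v \<bullet> v = 1" and \<beta>: "0 \<le> \<beta>"
  shows "v \<bullet> (A *\<^sub>v v) - z \<bullet> (A *\<^sub>v z) - 2 * \<beta> \<le> hess_f A \<beta> z v"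
proof -
  have "0 \<le> 6 * \<beta> * (\<Sum>k<n. (z $ k)\<^sup>2 * (v $ k)\<^sup>2)"
    using \<beta> by (simp add: sum_nonneg)
  moreover have "2 * \<beta> * (\<Sum>k<n. (z $ k) ^ 4) \<le> 2 * \<beta>"
    using mult_left_mono[OF sum_vec_entry_power4_le[OF z(1)], of "2 * \<beta>"] z(2) \<beta> by simp
  ultimately show ?thesis
    using hess_f_eq[OF A z(1) v(1)] v(2) by (simp add: two_lambda_eq[OF z(1)])
qed

section \<open>Landscape near the bottom eigenvector\<close>

locale bottom_eigenpair =
  fixes n :: nat and A :: "real mat" and u :: "real vec" and L M :: real
  assumes A_carrier: "A \<in> carrier_mat n n" and A_symmetric: "A\<^sup>T = A"
    and u_carrier: "u \<in> carrier_vec n" and u_unit: "u \<bullet> u = 1"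
    and u_eigen: "A *\<^sub>v u = L \<cdot>\<^sub>v u"
    and spectral_gap: "\<And>x. x \<in> carrier_vec n \<Longrightarrow> x \<bullet> u = 0 \<Longrightarrow> M * (x \<bullet> x) \<le> x \<bullet> (A *\<^sub>v x)"
    and gap_nonneg: "L \<le> M"
begin

lemma bottom_eigenpair_uminus: "bottom_eigenpair n A (- u) L M"
proof
  have "- u = (- 1) \<cdot>\<^sub>v u"
    by auto
  then show "A *\<^sub>v - u = L \<cdot>\<^sub>v - u"
    using A_carrier u_carrier u_eigen by (simp add: mult_mat_vec[of _ n n] smult_smult_assoc)
  show "M * (x \<bullet> x) \<le> x \<bullet> (A *\<^sub>v x)" if "x \<in> carrier_vec n" "x \<bullet> - u = 0" for x
    using spectral_gap that u_carrier by simp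
qed (use A_carrier A_symmetric u_carrier u_unit gap_nonneg in auto)

lemma u_scalar_prod_mult:
  "x \<in> carrier_vec n \<Longrightarrow> u \<bullet> (A *\<^sub>v x) = L * (u \<bullet> x)"
  using scalar_prod_symmetric_mat[OF A_carrier A_symmetric u_carrier, of x] u_eigen u_carrier
  by (simp add: comm_scalar_prod[of _ n])

lemma quadratic_form_lower_bound:
  assumes x: "x \<in> carrier_vec n"
  shows "M * (x \<bullet> x) - (M - L) * (u \<bullet> x)\<^sup>2 \<le> x \<bullet> (A *\<^sub>v x)"
proof -
  define c where "c = u \<bullet> x"
  define y where "y = x - c \<cdot>\<^sub>v u"
  have y: "y \<in> carrier_vec n"
    using x u_carrier by (simp add: y_def)
  have xc: "x \<bullet> u = c"
    using x u_carrier by (simp add: c_def comm_scalar_prod[of _ n])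
  have yu: "y \<bullet> u = 0"
    using x u_carrier u_unit xc by (simp add: y_def minus_scalar_prod_distrib[of _ n])
  have "x \<bullet> x = y \<bullet> y + c\<^sup>2"
    using x u_carrier u_unit xc
    by (simp add: y_def minus_scalar_prod_distrib[of _ n] scalar_prod_minus_distrib[of _ n]
        c_def power2_eq_square)
  moreover have "x \<bullet> (A *\<^sub>v x) = y \<bullet> (A *\<^sub>v y) + c\<^sup>2 * L"
    using x u_carrier A_carrier u_eigen u_unit xc u_scalar_prod_mult[OF x]
    by (simp add: y_def mult_minus_distrib_mat_vec[of _ n n] minus_scalar_prod_distrib[of _ n]
        scalar_prod_minus_distrib[of _ n] mult_mat_vec[of _ n n] c_def power2_eq_square
        algebra_simps)
  ultimately show ?thesis
    using spectral_gap[OF y yu] by (simp add: c_def distrib_left left_diff_distrib)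
qed

lemma rayleigh_quotient_gap:
  assumes z: "z \<in> carrier_vec n" "z \<bullet> z = 1"
  shows "(M - L) * (1 - (u \<bullet> z)\<^sup>2) \<le> z \<bullet> (A *\<^sub>v z) - L"
  using quadratic_form_lower_bound[OF z(1)] z(2) by (simp add: algebra_simps)

lemma tangential_part_of_u:
  assumes z: "z \<in> carrier_vec n" "z \<bullet> z = 1"
  defines "p \<equiv> u - (u \<bullet> z) \<cdot>\<^sub>v z"
  shows "p \<in> carrier_vec n" "p \<bullet> z = 0" "p \<bullet> p = 1 - (u \<bullet> z)\<^sup>2"
    "p \<bullet> (A *\<^sub>v p) = L * (1 - (u \<bullet> z)\<^sup>2) + (u \<bullet> z)\<^sup>2 * (z \<bullet> (A *\<^sub>v z) - L)"
proof -
  have zu: "z \<bullet> u = u \<bullet> z"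
    using z u_carrier by (simp add: comm_scalar_prod[of _ n])
  show "p \<in> carrier_vec n"
    using u_carrier z by (simp add: p_def)
  show "p \<bullet> z = 0"
    using u_carrier z by (simp add: p_def minus_scalar_prod_distrib[of _ n])
  show "p \<bullet> p = 1 - (u \<bullet> z)\<^sup>2"
    using u_carrier z u_unit zu
    by (simp add: p_def minus_scalar_prod_distrib[of _ n] scalar_prod_minus_distrib[of _ n]
        power2_eq_square)
  show "p \<bullet> (A *\<^sub>v p) = L * (1 - (u \<bullet> z)\<^sup>2) + (u \<bullet> z)\<^sup>2 * (z \<bullet> (A *\<^sub>v z) - L)"
    using u_carrier z A_carrier u_eigen u_unit zu u_scalar_prod_mult[OF z(1)]
    by (simp add: p_def mult_minus_distrib_mat_vec[of _ n n] minus_scalar_prod_distrib[of _ n]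
        scalar_prod_minus_distrib[of _ n] mult_mat_vec[of _ n n] power2_eq_square algebra_simps)
qed

lemma negative_curvature_near_equator:
  assumes z: "z \<in> carrier_vec n" "z \<bullet> z = 1" and c: "(u \<bullet> z)\<^sup>2 \<le> 1 / 5" and \<beta>: "0 \<le> \<beta>"
  obtains v where "v \<in> tangent z \<inter> unit_sphere n" "hess_f A \<beta> z v \<le> 3 * \<beta> - 3 / 5 * (M - L)"
proof -
  define c where "c = u \<bullet> z"
  define a where "a = z \<bullet> (A *\<^sub>v z) - L"
  define s where "s = 1 - c\<^sup>2"
  define p where "p = u - c \<cdot>\<^sub>v z"
  have s: "4 / 5 \<le> s"
    using c by (simp add: s_def c_def)
  have p: "p \<in> carrier_vec n" "p \<bullet> z = 0" "p \<bullet> p = s" "p \<bullet> (A *\<^sub>v p) = L * s + c\<^sup>2 * a"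
    using tangential_part_of_u[OF z] by (simp_all add: p_def c_def a_def s_def)
  define v where "v = (1 / sqrt s) \<cdot>\<^sub>v p"
  have v: "v \<in> carrier_vec n" "v \<bullet> v = 1" "v \<bullet> z = 0"
    using p s z(1) by (simp_all add: v_def power2_eq_square[symmetric])
  have "v \<bullet> (A *\<^sub>v v) = L + c\<^sup>2 * a / s"
    using p s A_carrier
    by (simp add: v_def mult_mat_vec[of _ n n] field_simps power2_eq_square[symmetric])
  then have "hess_f A \<beta> z v \<le> a * (2 * c\<^sup>2 - 1) / s + 3 * \<beta>"
    using hess_f_upper_bound[OF A_carrier z v \<beta>] s by (simp add: a_def s_def field_simps)
  also have "\<dots> \<le> (M - L) * (2 * c\<^sup>2 - 1) + 3 * \<beta>"
  proof -
    have "(M - L) * s \<le> a"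
      using rayleigh_quotient_gap[OF z] by (simp add: a_def s_def c_def)
    then have "a * (2 * c\<^sup>2 - 1) \<le> (M - L) * s * (2 * c\<^sup>2 - 1)"
      using c by (intro mult_right_mono_neg) (auto simp: c_def)
    then show ?thesis
      using s by (simp add: field_simps)
  qed
  also have "\<dots> \<le> 3 * \<beta> - 3 / 5 * (M - L)"
  proof -
    have "(M - L) * (2 * c\<^sup>2 - 1) \<le> (M - L) * (- 3 / 5)"
      using c gap_nonneg by (intro mult_left_mono) (auto simp: c_def)
    then show ?thesis
      by (simp add: algebra_simps)
  qed
  finally show ?thesis
    using that v z(1) by (auto simp: tangent_def unit_sphere_def)
qed

lemma u_scalar_prod_rayleigh_residual:
  assumes z: "z \<in> carrier_vec n"
  shows "u \<bullet> rayleigh_residual A z = - (z \<bullet> (A *\<^sub>v z) - L) * (u \<bullet> z)"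
  using z u_carrier A_carrier u_scalar_prod_mult[OF z]
  by (simp add: rayleigh_residual_def scalar_prod_minus_distrib[of _ n] algebra_simps)

lemma rayleigh_residual_cauchy_schwarz:
  assumes z: "z \<in> carrier_vec n" "z \<bullet> z = 1"
  defines "c \<equiv> u \<bullet> z" and "a \<equiv> z \<bullet> (A *\<^sub>v z) - L"
  shows "c\<^sup>2 * a\<^sup>2 \<le> (1 - c\<^sup>2) * (rayleigh_residual A z \<bullet> rayleigh_residual A z)"
proof -
  define b where "b = A *\<^sub>v z - L \<cdot>\<^sub>v z"
  define w where "w = z - c \<cdot>\<^sub>v u"
  have b: "b \<in> carrier_vec n" and w: "w \<in> carrier_vec n"
    using A_carrier z u_carrier by (simp_all add: b_def w_def)
  have zb: "z \<bullet> b = a"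
    using A_carrier z by (simp add: b_def a_def scalar_prod_minus_distrib[of _ n])
  have "rayleigh_residual A z = b - a \<cdot>\<^sub>v z"
    using A_carrier z
    by (intro eq_vecI) (auto simp: rayleigh_residual_def b_def a_def algebra_simps)
  then have hh: "rayleigh_residual A z \<bullet> rayleigh_residual A z = b \<bullet> b - a\<^sup>2"
    using b z zb by (simp add: minus_scalar_prod_distrib[of _ n] scalar_prod_minus_distrib[of _ n]
        comm_scalar_prod[of b n z] power2_eq_square)
  have "u \<bullet> b = 0"
    using A_carrier z u_carrier u_scalar_prod_mult[OF z(1)]
    by (simp add: b_def scalar_prod_minus_distrib[of _ n])
  then have "w \<bullet> b = a"
    using z u_carrier b zb by (simp add: w_def minus_scalar_prod_distrib[of _ n])
  moreover have "w \<bullet> w = 1 - c\<^sup>2"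
    using z u_carrier u_unit
    by (simp add: w_def minus_scalar_prod_distrib[of _ n] scalar_prod_minus_distrib[of _ n]
        comm_scalar_prod[of z n u] c_def power2_eq_square)
  ultimately have "a\<^sup>2 \<le> (1 - c\<^sup>2) * (b \<bullet> b)"
    using scalar_prod_square_le[OF w b] by simp
  then show ?thesis
    by (simp add: hh algebra_simps)
qed

lemma rayleigh_residual_lower_bound:
  assumes z: "z \<in> carrier_vec n" "z \<bullet> z = 1"
  defines "c \<equiv> u \<bullet> z"
  shows "(M - L)\<^sup>2 * (c\<^sup>2 * (1 - c\<^sup>2)) \<le> rayleigh_residual A z \<bullet> rayleigh_residual A z"
proof -
  define a where "a = z \<bullet> (A *\<^sub>v z) - L"
  have "\<bar>c\<bar> \<le> 1"
    using abs_scalar_prod_le[OF u_carrier z(1)] u_unit z(2) by (simp add: c_def)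
  then have c1: "0 \<le> 1 - c\<^sup>2"
    by (simp add: abs_square_le_1)
  moreover have "(M - L) * (1 - c\<^sup>2) \<le> a"
    using rayleigh_quotient_gap[OF z] by (simp add: a_def c_def)
  ultimately have "((M - L) * (1 - c\<^sup>2))\<^sup>2 \<le> a\<^sup>2"
    using gap_nonneg by (intro power_mono) auto
  have "(1 - c\<^sup>2) * ((M - L)\<^sup>2 * (c\<^sup>2 * (1 - c\<^sup>2))) = c\<^sup>2 * ((M - L) * (1 - c\<^sup>2))\<^sup>2"
    by (simp add: eval_nat_numeral algebra_simps)
  also have "\<dots> \<le> c\<^sup>2 * a\<^sup>2"
    by (rule mult_left_mono) (simp_all add: \<open>((M - L) * (1 - c\<^sup>2))\<^sup>2 \<le> a\<^sup>2\<close>)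
  also have "\<dots> \<le> (1 - c\<^sup>2) * (rayleigh_residual A z \<bullet> rayleigh_residual A z)"
    using rayleigh_residual_cauchy_schwarz[OF z] by (simp add: a_def c_def)
  finally have key: "(1 - c\<^sup>2) * ((M - L)\<^sup>2 * (c\<^sup>2 * (1 - c\<^sup>2)))
      \<le> (1 - c\<^sup>2) * (rayleigh_residual A z \<bullet> rayleigh_residual A z)" .
  show ?thesis
  proof (cases "c\<^sup>2 = 1")
    case True
    then show ?thesis
      using scalar_prod_self_nonneg[of "rayleigh_residual A z"] by simp
  next
    case False
    then have "0 < 1 - c\<^sup>2"
      using c1 by simp
    with key show ?thesis
      by (rule mult_left_le_imp_le)
  qed
qed

lemma gradient_large_between:
  assumes z: "z \<in> carrier_vec n" "z \<bullet> z = 1"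
    and c: "1 / 5 \<le> (u \<bullet> z)\<^sup>2" "(u \<bullet> z)\<^sup>2 \<le> 4 / 5" and \<beta>: "0 \<le> \<beta>"
  shows "2 / 5 * (M - L) - \<beta> \<le> sqrt (grad_f A \<beta> z \<bullet> grad_f A \<beta> z)"
proof -
  let ?h = "rayleigh_residual A z" and ?r = "quartic_residual z" and ?g = "grad_f A \<beta> z"
  have h: "?h \<in> carrier_vec n" and g: "?g \<in> carrier_vec n"
    using rayleigh_residual_carrier[OF A_carrier z(1)] z(1)
    by (simp_all add: grad_f_decomposition[OF A_carrier z(1)])
  have "4 / 25 \<le> (u \<bullet> z)\<^sup>2 * (1 - (u \<bullet> z)\<^sup>2)"
    using mult_nonneg_nonneg[of "(u \<bullet> z)\<^sup>2 - 1 / 5" "4 / 5 - (u \<bullet> z)\<^sup>2"] c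
    by (simp add: algebra_simps)
  then have "(M - L)\<^sup>2 * (4 / 25) \<le> (M - L)\<^sup>2 * ((u \<bullet> z)\<^sup>2 * (1 - (u \<bullet> z)\<^sup>2))"
    by (rule mult_left_mono) simp
  moreover have "(2 / 5 * (M - L))\<^sup>2 = (M - L)\<^sup>2 * (4 / 25)"
    by (simp add: field_simps power2_eq_square)
  ultimately have "(2 / 5 * (M - L))\<^sup>2 \<le> ?h \<bullet> ?h"
    using rayleigh_residual_lower_bound[OF z] by linarith
  then have "2 / 5 * (M - L) \<le> sqrt (?h \<bullet> ?h)"
    by (rule real_le_rsqrt)
  moreover have "?h = ?g + (- 2 * \<beta>) \<cdot>\<^sub>v ?r"
    using h quartic_residual_carrier[OF z(1)]
    by (intro eq_vecI) (auto simp: grad_f_decomposition[OF A_carrier z(1)])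
  then have "sqrt (?h \<bullet> ?h) \<le> sqrt (?g \<bullet> ?g) + \<bar>- 2 * \<beta>\<bar> * sqrt (?r \<bullet> ?r)"
    using sqrt_scalar_prod_add_smult_le[OF g quartic_residual_carrier[OF z(1)]] by (simp only:)
  moreover have "\<bar>- 2 * \<beta>\<bar> * sqrt (?r \<bullet> ?r) \<le> \<beta>"
    using mult_left_mono[OF quartic_residual_norm_le[OF z], of "2 * \<beta>"] \<beta> by simp
  ultimately show ?thesis
    by linarith
qed

lemma rayleigh_excess_mult_le_gradient:
  assumes z: "z \<in> carrier_vec n" "z \<bullet> z = 1" and \<beta>: "0 \<le> \<beta>"
  shows "(z \<bullet> (A *\<^sub>v z) - L) * (u \<bullet> z) \<le> \<beta> + sqrt (grad_f A \<beta> z \<bullet> grad_f A \<beta> z)"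
proof -
  let ?g = "grad_f A \<beta> z" and ?r = "quartic_residual z"
  have g: "?g \<in> carrier_vec n"
    using rayleigh_residual_carrier[OF A_carrier z(1)] z(1)
    by (simp add: grad_f_decomposition[OF A_carrier z(1)])
  have "u \<bullet> ?g = - ((z \<bullet> (A *\<^sub>v z) - L) * (u \<bullet> z)) + 2 * \<beta> * (u \<bullet> ?r)"
    using z u_carrier u_scalar_prod_rayleigh_residual[OF z(1)]
      rayleigh_residual_carrier[OF A_carrier z(1)]
    by (simp add: grad_f_decomposition[OF A_carrier z(1)] scalar_prod_add_distrib[of _ n]
        left_diff_distrib)
  moreover have "\<bar>u \<bullet> ?g\<bar> \<le> sqrt (?g \<bullet> ?g)"
    using abs_scalar_prod_le[OF u_carrier g] u_unit by simp
  moreover have "u \<bullet> ?r \<le> 1 / 2"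
    using abs_scalar_prod_le[OF u_carrier quartic_residual_carrier[OF z(1)]] u_unit
      quartic_residual_norm_le[OF z] by simp
  then have "2 * \<beta> * (u \<bullet> ?r) \<le> \<beta>"
    using mult_left_mono[of "u \<bullet> ?r" "1 / 2" "2 * \<beta>"] \<beta> by simp
  ultimately show ?thesis
    by linarith
qed

lemma positive_curvature_near_pole:
  assumes z: "z \<in> carrier_vec n" "z \<bullet> z = 1" and c: "4 / 5 \<le> (u \<bullet> z)\<^sup>2" "0 \<le> u \<bullet> z"
    and \<beta>: "0 \<le> \<beta>" and \<xi>: "0 \<le> \<xi>"
    and grad: "sqrt (grad_f A \<beta> z \<bullet> grad_f A \<beta> z) \<le> \<epsilon>"
    and budget: "3 * \<beta> + \<epsilon> + \<xi> \<le> 2 / 3 * (M - L)"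
    and v: "v \<in> tangent z \<inter> unit_sphere n"
  shows "\<xi> \<le> hess_f A \<beta> z v"
proof -
  define c where "c = u \<bullet> z"
  define a where "a = z \<bullet> (A *\<^sub>v z) - L"
  have v: "v \<in> carrier_vec n" "v \<bullet> v = 1" "v \<bullet> z = 0"
    using v z(1) by (auto simp: tangent_def unit_sphere_def)
  have bessel: "c\<^sup>2 + (u \<bullet> v)\<^sup>2 \<le> 1"
    using bessel_orthonormal_pair[OF u_carrier z v] u_unit by (simp add: c_def)
  have "(5 / 6)\<^sup>2 \<le> c\<^sup>2"
    using c(1) by (simp add: c_def power_divide)
  then have c_ge: "5 / 6 \<le> c"
    using c(2) unfolding c_def by (rule power2_le_imp_le)
  have "c\<^sup>2 \<le> 1"
    using bessel zero_le_power2[of "u \<bullet> v"] by linarith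
  then have c_le: "c \<le> 1"
    using power2_le_imp_le[of c 1] by simp
  have "M - (M - L) * (u \<bullet> v)\<^sup>2 \<le> v \<bullet> (A *\<^sub>v v)"
    using quadratic_form_lower_bound[OF v(1)] v(2) by simp
  moreover have "(M - L) * c\<^sup>2 \<le> (M - L) * (1 - (u \<bullet> v)\<^sup>2)"
    using bessel gap_nonneg by (intro mult_left_mono) auto
  ultimately have "(M - L) * c\<^sup>2 - a - 2 * \<beta> \<le> hess_f A \<beta> z v"
    using hess_f_lower_bound[OF A_carrier z v(1,2) \<beta>] by (simp add: a_def algebra_simps)
  then have "c * ((M - L) * c\<^sup>2 - a - 2 * \<beta> - \<xi>) \<le> c * (hess_f A \<beta> z v - \<xi>)"
    using c_ge by (intro mult_left_mono) auto
  moreover have "c * ((M - L) * c\<^sup>2 - a - 2 * \<beta> - \<xi>)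
      = (M - L) * (c\<^sup>2 * c) - a * c - 2 * (\<beta> * c) - \<xi> * c"
    by (simp add: algebra_simps)
  moreover have "4 / 5 * (5 / 6) \<le> c\<^sup>2 * c"
    using c c_ge by (intro mult_mono) (auto simp: c_def)
  then have "(M - L) * (2 / 3) \<le> (M - L) * (c\<^sup>2 * c)"
    using gap_nonneg by (intro mult_left_mono) auto
  moreover have "\<beta> * c \<le> \<beta>" "\<xi> * c \<le> \<xi>"
    using c_le \<beta> \<xi> by (simp_all add: mult_left_le)
  moreover have "a * c \<le> \<beta> + \<epsilon>"
    using rayleigh_excess_mult_le_gradient[OF z \<beta>] grad by (simp add: a_def c_def)
  ultimately have "0 \<le> c * (hess_f A \<beta> z v - \<xi>)"
    using budget by linarith
  then show ?thesis
    using c_ge by (simp add: zero_le_mult_iff)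
qed

lemma strict_saddle_alternatives:
  assumes \<beta>: "0 < \<beta>" and t: "0 \<le> t" and budget: "16 / 3 * \<beta> + 3 * t \<le> M - L"
    and z: "z \<in> unit_sphere n" and c: "0 \<le> u \<bullet> z"
  shows "(\<forall>v\<in>tangent z \<inter> unit_sphere n. t \<le> hess_f A \<beta> z v)
    \<or> t \<le> sqrt (grad_f A \<beta> z \<bullet> grad_f A \<beta> z)
    \<or> (\<exists>v\<in>tangent z \<inter> unit_sphere n. hess_f A \<beta> z v \<le> - t)"
proof -
  have z: "z \<in> carrier_vec n" "z \<bullet> z = 1"
    using z by (auto simp: unit_sphere_def)
  consider "(u \<bullet> z)\<^sup>2 \<le> 1 / 5" | "1 / 5 \<le> (u \<bullet> z)\<^sup>2" "(u \<bullet> z)\<^sup>2 \<le> 4 / 5" | "4 / 5 \<le> (u \<bullet> z)\<^sup>2"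
    by linarith
  then show ?thesis
  proof cases
    case 1
    then obtain v where "v \<in> tangent z \<inter> unit_sphere n" "hess_f A \<beta> z v \<le> 3 * \<beta> - 3 / 5 * (M - L)"
      using negative_curvature_near_equator[OF z _ less_imp_le[OF \<beta>]] by blast
    moreover have "3 * \<beta> - 3 / 5 * (M - L) \<le> - t"
      using budget \<beta> t by (simp add: algebra_simps)
    ultimately show ?thesis
      by force
  next
    case 2
    then have "2 / 5 * (M - L) - \<beta> \<le> sqrt (grad_f A \<beta> z \<bullet> grad_f A \<beta> z)"
      using gradient_large_between[OF z] \<beta> by auto
    moreover have "t \<le> 2 / 5 * (M - L) - \<beta>"
      using budget \<beta> t by (simp add: algebra_simps)
    ultimately have "t \<le> sqrt (grad_f A \<beta> z \<bullet> grad_f A \<beta> z)"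
      by linarith
    then show ?thesis
      by simp
  next
    case 3
    show ?thesis
    proof (cases "t \<le> sqrt (grad_f A \<beta> z \<bullet> grad_f A \<beta> z)")
      case False
      then have "t \<le> hess_f A \<beta> z v" if "v \<in> tangent z \<inter> unit_sphere n" for v
        using positive_curvature_near_pole[OF z 3 c _ t _ _ that, of \<beta> t] \<beta> budget by auto
      then show ?thesis
        by blast
    qed simp
  qed
qed

theorem strict_saddle_of_gap:
  assumes "0 < \<beta>" "0 \<le> t" "16 / 3 * \<beta> + 3 * t \<le> M - L"
  shows "strict_saddle n A \<beta> t t t"
  unfolding strict_saddle_def
proof
  fix z assume z: "z \<in> unit_sphere n"
  show "(\<forall>v\<in>tangent z \<inter> unit_sphere n. t \<le> hess_f A \<beta> z v)
    \<or> t \<le> sqrt (grad_f A \<beta> z \<bullet> grad_f A \<beta> z)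
    \<or> (\<exists>v\<in>tangent z \<inter> unit_sphere n. hess_f A \<beta> z v \<le> - t)"
  proof (cases "0 \<le> u \<bullet> z")
    case True
    then show ?thesis
      using strict_saddle_alternatives[OF assms z] by blast
  next
    case False
    moreover have "z \<in> carrier_vec n"
      using z by (simp add: unit_sphere_def)
    ultimately have "0 \<le> - u \<bullet> z"
      using u_carrier by simp
    then show ?thesis
      using bottom_eigenpair.strict_saddle_alternatives[OF bottom_eigenpair_uminus assms z] by blast
  qed
qed

end

lemma step_size_budget:
  fixes \<beta> \<gamma> \<rho> \<delta> :: real
  assumes "0 < \<delta>" "\<delta> \<le> \<rho>" "0 < \<gamma>" "0 < \<beta>"
    and "\<beta> \<le> \<delta> / (2 * (7 / 3 + \<gamma>) + (2 / 3 + \<gamma>) * (\<rho> / \<delta>))"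
  shows "16 / 3 * \<beta> + 3 * (\<gamma> * \<beta>) \<le> \<delta>"
proof -
  define D where "D = 2 * (7 / 3 + \<gamma>) + (2 / 3 + \<gamma>) * (\<rho> / \<delta>)"
  have "1 \<le> \<rho> / \<delta>"
    using assms by simp
  then have "(2 / 3 + \<gamma>) * 1 \<le> (2 / 3 + \<gamma>) * (\<rho> / \<delta>)"
    using assms by (intro mult_left_mono) auto
  then have "16 / 3 + 3 * \<gamma> \<le> D"
    by (simp add: D_def)
  then have "\<beta> * (16 / 3 + 3 * \<gamma>) \<le> \<beta> * D"
    using assms by (intro mult_left_mono) auto
  also have "\<beta> * D \<le> \<delta>"
  proof -
    have "\<beta> \<le> \<delta> / D"
      using assms(5) by (simp only: D_def)
    moreover have "0 < D"
      using \<open>16 / 3 + 3 * \<gamma> \<le> D\<close> assms(3) by linarith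
    ultimately show ?thesis
      by (simp add: pos_le_divide_eq)
  qed
  finally show ?thesis
    by (simp add: algebra_simps)
qed

theorem theorem14:
  fixes n :: nat and A :: "real mat" and \<beta> \<gamma> \<rho> \<delta> :: real
  assumes "n \<ge> 2"
    and "A \<in> carrier_mat n n"
    and "transpose_mat A = A"
    and "\<rho> = eigs A ! 0 - eigs A ! (n - 1)"
    and "\<delta> = eigs A ! (n - 2) - eigs A ! (n - 1)"
    and "\<delta> > 0"
    and "\<gamma> > 0"
    and "\<beta> > 0"
    and "\<beta> \<le> \<delta> / (2 * (7/3 + \<gamma>) + (2/3 + \<gamma>) * (\<rho> / \<delta>))"
  shows "strict_saddle n A \<beta> (\<gamma> * \<beta>) (\<gamma> * \<beta>) (\<gamma> * \<beta>)"
proof -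
  obtain u where u: "u \<in> carrier_vec n" "u \<bullet> u = 1" "A *\<^sub>v u = eigs A ! (n - 1) \<cdot>\<^sub>v u"
    and gap: "\<And>x. x \<in> carrier_vec n \<Longrightarrow> x \<bullet> u = 0 \<Longrightarrow> eigs A ! (n - 2) * (x \<bullet> x) \<le> x \<bullet> (A *\<^sub>v x)"
    using real_symmetric_mat_bottom_eigenvector[OF assms(2,3,1)] by blast
  interpret bottom_eigenpair n A u "eigs A ! (n - 1)" "eigs A ! (n - 2)"
    using assms(2,3,5,6) u gap by unfold_locales auto
  have "\<delta> \<le> \<rho>"
    using eigs_antimono[of 0 "n - 2" A] length_eigs_real_symmetric[OF assms(2,3)] assms(1,4,5)
    by simp
  then have "16 / 3 * \<beta> + 3 * (\<gamma> * \<beta>) \<le> \<delta>"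
    using step_size_budget assms(6-9) by blast
  then show ?thesis
    using strict_saddle_of_gap assms(5,7,8) by simp
qed

end
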